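(* Let $T$ be a positive integer and $\epsilon = T^{-1/3}$. Consider the forecaster that sets $S_0 = 0$ and, for $t = 1,\ldots,T$, predicts $p_t = 1/2 + \epsilon\cdot\mathrm{sgn}(S_{t-1})$, observes $x_t$, and sets $S_t = S_{t-1} + (x_t - p_t)$. If $x_1,\ldots,x_T$ are independent $\mathrm{Bernoulli}(1/2)$ bits, then $\mathbb{E}[\mathsf{smCE}(x,p)] \le C\,T^{1/3}$ for a universal constant $C$.
   Context: $\mathrm{sgn}(0) = 0$, $\mathrm{sgn}(y)=1$ for $y>0$, $\mathrm{sgn}(y)=-1$ for $y<0$. $\mathsf{smCE}(x,p) = \sup_{f \in \mathcal{F}} \sum_{t=1}^T f(p_t)(x_t - p_t)$, where $\mathcal{F}$ is the family of $1$-Lipschitz functions from $[0,1]$ to $[-1,1]$. *)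

theory Defs
  imports "HOL-Analysis.Analysis"
begin

text \<open>They are represented as functions on all of the reals; restricted to [0,1]
  these are exactly the 1-Lipschitz maps [0,1] -> [-1,1].\<close>
definition smF :: "(real \<Rightarrow> real) set" where
  "smF = {f. 1-lipschitz_on UNIV f \<and> (\<forall>y. \<bar>f y\<bar> \<le> 1)}"

definition smCE :: "nat \<Rightarrow> (nat \<Rightarrow> real) \<Rightarrow> (nat \<Rightarrow> real) \<Rightarrow> real" where
  "smCE T x p = (SUP f\<in>smF. \<Sum>t=1..T. f (p t) * (x t - p t))"

fun fcS :: "real \<Rightarrow> (nat \<Rightarrow> real) \<Rightarrow> nat \<Rightarrow> real" where
  "fcS eps x 0 = 0"
| "fcS eps x (Suc t) = fcS eps x t + (x (Suc t) - (1/2 + eps * sgn (fcS eps x t)))"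

definition fcP :: "real \<Rightarrow> (nat \<Rightarrow> real) \<Rightarrow> nat \<Rightarrow> real" where
  "fcP eps x t = 1/2 + eps * sgn (fcS eps x (t - 1))"

end

theory Submission
  imports Defs
begin

text \<open>Let \<open>S = fcS a x\<close> with \<open>a = T powr (-1/3)\<close>. The potential \<open>cosh (a * S t)\<close> is almost contracting:
  averaging over the next bit multiplies it by \<open>cosh (a/2) * exp (-a\<^sup>2)\<close> up to an additive
  \<open>O(a\<^sup>2)\<close>, because the forecaster always pushes \<open>S t\<close> towards 0. Hence the mean of
  \<open>cosh (a * S T)\<close> is \<open>O(1)\<close> and that of \<open>|S T|\<close> is \<open>O(1/a)\<close>.
  A test function \<open>f\<close> only sees the three predictions \<open>1/2\<close> and \<open>1/2 \<plusminus> a\<close>; writing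
  \<open>f (p t) = f (1/2) + (f (p t) - f (1/2))\<close> splits the calibration sum into \<open>f (1/2) * S T\<close>,
  two martingale transforms of the centred bits with coefficients of size at most \<open>a\<close>
  (each of mean square at most \<open>T/4\<close>), and a drift of at most \<open>a\<^sup>2\<close> per round.
  Altogether the mean of \<open>smCE\<close> is \<open>O(1/a + a\<^sup>3 T + a\<^sup>2 T) = O(T powr (1/3))\<close>.\<close>

lemma mult_le_bound_abs: "\<bar>c\<bar> \<le> k \<Longrightarrow> c * y \<le> k * \<bar>y\<bar>" for c k y :: real
  by (metis abs_ge_self abs_ge_zero abs_mult mult_right_mono order_trans)

lemma mult_abs_le_cube_sq:
  fixes a m :: real
  assumes "0 < a"
  shows "a * \<bar>m\<bar> \<le> a ^ 3 / 2 * m\<^sup>2 + 1 / (2 * a)"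
proof -
  have "2 * (a\<^sup>2 * \<bar>m\<bar>) * 1 \<le> (a\<^sup>2 * \<bar>m\<bar>)\<^sup>2 + 1\<^sup>2" by (rule sum_squares_bound)
  then show ?thesis using assms by (simp add: field_simps power2_eq_square power3_eq_cube)
qed

lemma exp_le_one_plus_three_mult:
  fixes u :: real
  assumes "0 \<le> u" "u \<le> 1"
  shows "exp u \<le> 1 + 3 * u"
proof -
  have "exp u \<le> 1 + u * exp u"
    using exp_ge_add_one_self[of "- u"] by (simp add: exp_minus field_simps)
  moreover have "u * exp u \<le> u * 3"
    using assms exp_le by (intro mult_left_mono) (auto intro: order_trans)
  ultimately show ?thesis by linarith
qed

lemma sinh_le_two_mult:
  fixes u :: real
  assumes "0 \<le> u" "u \<le> 1"
  shows "sinh u \<le> 2 * u"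
  using exp_le_one_plus_three_mult[OF assms] exp_ge_add_one_self[of "- u"]
  by (simp add: sinh_field_def)

lemma cosh_le_one_plus_two_sq:
  fixes y :: real
  assumes "\<bar>y\<bar> \<le> 2"
  shows "cosh y \<le> 1 + 2 * y\<^sup>2"
proof -
  have "cosh y = 1 + 2 * (sinh (y / 2))\<^sup>2"
    using cosh_double[of "y / 2"] cosh_square_eq[of "y / 2"] by simp
  also have "\<dots> = 1 + 2 * (sinh \<bar>y / 2\<bar>)\<^sup>2" by (simp only: sinh_real_abs power2_abs)
  also have "\<dots> \<le> 1 + 2 * y\<^sup>2"
  proof -
    have "sinh \<bar>y / 2\<bar> \<le> \<bar>y\<bar>" using sinh_le_two_mult[of "\<bar>y / 2\<bar>"] assms by simp
    then have "(sinh \<bar>y / 2\<bar>)\<^sup>2 \<le> \<bar>y\<bar>\<^sup>2" by (intro power_mono) simp_all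
    then show ?thesis by simp
  qed
  finally show ?thesis .
qed

lemma cosh_diff_le:
  fixes u v :: real
  assumes "0 \<le> u" "0 \<le> v"
  shows "cosh (u - v) \<le> exp (- v) * cosh u + sinh v"
proof -
  have "exp (- v) * cosh u + sinh v - cosh (u - v) = sinh v * (1 - exp (- u))"
    by (simp add: cosh_diff flip: cosh_minus_sinh) (simp add: algebra_simps)
  moreover have "0 \<le> sinh v * (1 - exp (- u))" using assms by simp
  ultimately show ?thesis by linarith
qed

lemma abs_le_two_cosh: "\<bar>y\<bar> \<le> 2 * cosh (y::real)"
proof -
  have "\<bar>y\<bar> \<le> exp \<bar>y\<bar>" using exp_ge_add_one_self[of "\<bar>y\<bar>"] by linarith
  also have "\<dots> = cosh \<bar>y\<bar> + sinh \<bar>y\<bar>" by (rule cosh_plus_sinh[symmetric])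
  also have "\<dots> \<le> 2 * cosh y" using sinh_le_cosh_real[of "\<bar>y\<bar>"] by simp
  finally show ?thesis .
qed

lemma sum_PiE_insert:
  assumes "m \<notin> S"
  shows "(\<Sum>x\<in>insert m S \<rightarrow>\<^sub>E B. h x) = (\<Sum>g\<in>S \<rightarrow>\<^sub>E B. \<Sum>y\<in>B. h (g(m := y)))"
proof -
  have "(\<Sum>x\<in>insert m S \<rightarrow>\<^sub>E B. h x) = (\<Sum>(y, g)\<in>B \<times> (S \<rightarrow>\<^sub>E B). h (g(m := y)))"
    unfolding PiE_insert_eq
    by (subst sum.reindex) (use inj_combinator[OF assms, of "\<lambda>_. B"] in \<open>auto simp: case_prod_beta'\<close>)
  also have "\<dots> = (\<Sum>g\<in>S \<rightarrow>\<^sub>E B. \<Sum>y\<in>B. h (g(m := y)))"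
    by (simp add: sum.cartesian_product[symmetric] sum.swap[of _ B])
  finally show ?thesis .
qed

definition cube_mean :: "nat \<Rightarrow> ((nat \<Rightarrow> real) \<Rightarrow> real) \<Rightarrow> real" where
  "cube_mean n h = (\<Sum>x\<in>{1..n} \<rightarrow>\<^sub>E {0, 1::real}. h x) / 2 ^ n"

lemma cube_mean_Suc:
  "cube_mean (Suc n) h = cube_mean n (\<lambda>x. (h (x(Suc n := 0)) + h (x(Suc n := 1))) / 2)"
proof -
  have "{1..Suc n} = insert (Suc n) {1..n}" by auto
  then show ?thesis
    unfolding cube_mean_def by (simp add: sum_PiE_insert sum_divide_distrib[symmetric])
qed

lemma cube_mean_mono: "(\<And>x. h x \<le> g x) \<Longrightarrow> cube_mean n h \<le> cube_mean n g"
  unfolding cube_mean_def by (intro divide_right_mono sum_mono) auto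

lemma cube_mean_add: "cube_mean n (\<lambda>x. h x + g x) = cube_mean n h + cube_mean n g"
  unfolding cube_mean_def by (simp add: sum.distrib add_divide_distrib)

lemma cube_mean_cmult: "cube_mean n (\<lambda>x. c * h x) = c * cube_mean n h"
  unfolding cube_mean_def by (simp add: sum_distrib_left)

lemma cube_mean_const: "cube_mean n (\<lambda>_. c) = c"
  unfolding cube_mean_def by (simp add: card_PiE)

text \<open>The weight \<open>w x t\<close> depends only on the bits \<open>x 1, \<dots>, x (t - 1)\<close>.\<close>
definition predictable :: "((nat \<Rightarrow> real) \<Rightarrow> nat \<Rightarrow> real) \<Rightarrow> bool" where
  "predictable w \<longleftrightarrow> (\<forall>x m b t. t \<le> m \<longrightarrow> w (x(m := b)) t = w x t)"

definition martingale_transform :: "(nat \<Rightarrow> real) \<Rightarrow> (nat \<Rightarrow> real) \<Rightarrow> nat \<Rightarrow> real" where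
  "martingale_transform w x n = (\<Sum>t=1..n. w t * (x t - 1/2))"

lemma martingale_transform_fun_upd_Suc:
  assumes "predictable w"
  shows "martingale_transform (w (x(Suc n := b))) (x(Suc n := b)) (Suc n)
       = martingale_transform (w x) x n + w x (Suc n) * (b - 1/2)"
proof -
  have "w (x(Suc n := b)) t = w x t" if "t \<le> Suc n" for t
    using assms that unfolding predictable_def by blast
  then show ?thesis
    unfolding martingale_transform_def by (auto intro!: sum.cong)
qed

lemma cube_mean_martingale_transform_sq:
  assumes "predictable w" and "\<And>x t. \<bar>w x t\<bar> \<le> 1"
  shows "cube_mean n (\<lambda>x. (martingale_transform (w x) x n)\<^sup>2) \<le> n / 4"
proof (induction n)
  case 0
  show ?case by (simp add: martingale_transform_def cube_mean_const)
next
  case (Suc n)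
  have step: "((M + c * (0 - 1/2))\<^sup>2 + (M + c * (1 - 1/2))\<^sup>2) / 2 \<le> M\<^sup>2 + 1/4"
    if "\<bar>c\<bar> \<le> 1" for M c :: real
  proof -
    have "c\<^sup>2 \<le> 1" using that abs_le_square_iff[of c 1] by simp
    then show ?thesis by (simp add: power2_eq_square field_simps)
  qed
  have "cube_mean (Suc n) (\<lambda>x. (martingale_transform (w x) x (Suc n))\<^sup>2)
      \<le> cube_mean n (\<lambda>x. (martingale_transform (w x) x n)\<^sup>2 + 1/4)"
    unfolding cube_mean_Suc martingale_transform_fun_upd_Suc[OF assms(1)]
    by (rule cube_mean_mono) (rule step[OF assms(2)])
  also have "\<dots> \<le> Suc n / 4" using Suc by (simp add: cube_mean_add cube_mean_const)
  finally show ?case .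
qed

lemma smCE_three_level_le:
  fixes \<sigma> :: "nat \<Rightarrow> real"
  assumes "0 \<le> a" and \<sigma>: "\<And>t. \<sigma> t \<in> {-1, 0, 1}"
  shows "smCE n x (\<lambda>t. 1/2 + a * \<sigma> t)
    \<le> \<bar>\<Sum>t=1..n. x t - (1/2 + a * \<sigma> t)\<bar>
       + a * \<bar>martingale_transform (\<lambda>t. of_bool (\<sigma> t = 1)) x n\<bar>
       + a * \<bar>martingale_transform (\<lambda>t. of_bool (\<sigma> t = -1)) x n\<bar> + a\<^sup>2 * n"
  unfolding smCE_def
proof (rule cSUP_least)
  show "smF \<noteq> {}" unfolding smF_def by (auto simp: lipschitz_on_def intro!: exI[of _ "\<lambda>_. 0"])
next
  fix f assume "f \<in> smF"
  then have lip: "\<bar>f u - f v\<bar> \<le> \<bar>u - v\<bar>" and bounded: "\<bar>f u\<bar> \<le> 1" for u v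
    unfolding smF_def lipschitz_on_def by (auto simp: dist_real_def)
  define p where "p t = 1/2 + a * \<sigma> t" for t
  define up down where "up = f (1/2 + a) - f (1/2)" and "down = f (1/2 - a) - f (1/2)"
  have jumps: "\<bar>up\<bar> \<le> a" "\<bar>down\<bar> \<le> a"
    using lip[of "1/2 + a" "1/2"] lip[of "1/2 - a" "1/2"] assms(1) by (auto simp: up_def down_def)
  have per_round: "f (p t) * (x t - p t) \<le> f (1/2) * (x t - p t)
      + up * (of_bool (\<sigma> t = 1) * (x t - 1/2)) + down * (of_bool (\<sigma> t = -1) * (x t - 1/2)) + a\<^sup>2" for t
  proof -
    have decomposition: "f (p t) * (x t - p t) = f (1/2) * (x t - p t)
        + (f (p t) - f (1/2)) * (x t - 1/2) - (f (p t) - f (1/2)) * (a * \<sigma> t)"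
      by (simp add: p_def algebra_simps)
    have "\<bar>a * \<sigma> t\<bar> \<le> a"
      using \<sigma>[of t] assms(1) by auto
    moreover have "\<bar>f (p t) - f (1/2)\<bar> \<le> \<bar>a * \<sigma> t\<bar>"
      using lip[of "p t" "1/2"] by (simp add: p_def)
    ultimately have "\<bar>(f (p t) - f (1/2)) * (a * \<sigma> t)\<bar> \<le> a * a"
      unfolding abs_mult by (intro mult_mono) auto
    then have drift: "- ((f (p t) - f (1/2)) * (a * \<sigma> t)) \<le> a\<^sup>2"
      unfolding power2_eq_square by linarith
    consider "\<sigma> t = 1" | "\<sigma> t = -1" | "\<sigma> t = 0" using \<sigma>[of t] by blast
    then have "(f (p t) - f (1/2)) * (x t - 1/2)
        = up * (of_bool (\<sigma> t = 1) * (x t - 1/2)) + down * (of_bool (\<sigma> t = -1) * (x t - 1/2))"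
      by cases (simp_all add: p_def up_def down_def)
    then show ?thesis using decomposition drift by linarith
  qed
  have "(\<Sum>t=1..n. f (p t) * (x t - p t)) \<le> (\<Sum>t=1..n. f (1/2) * (x t - p t)
      + up * (of_bool (\<sigma> t = 1) * (x t - 1/2)) + down * (of_bool (\<sigma> t = -1) * (x t - 1/2)) + a\<^sup>2)"
    by (rule sum_mono) (rule per_round)
  also have "\<dots> = f (1/2) * (\<Sum>t=1..n. x t - p t)
      + up * martingale_transform (\<lambda>t. of_bool (\<sigma> t = 1)) x n
      + down * martingale_transform (\<lambda>t. of_bool (\<sigma> t = -1)) x n + a\<^sup>2 * n"
    unfolding martingale_transform_def by (simp only: sum.distrib sum_distrib_left) simp
  also have "\<dots> \<le> 1 * \<bar>\<Sum>t=1..n. x t - p t\<bar>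
      + a * \<bar>martingale_transform (\<lambda>t. of_bool (\<sigma> t = 1)) x n\<bar>
      + a * \<bar>martingale_transform (\<lambda>t. of_bool (\<sigma> t = -1)) x n\<bar> + a\<^sup>2 * n"
    using bounded jumps by (intro add_mono mult_le_bound_abs order_refl)
  finally show "(\<Sum>t=1..n. f (1/2 + a * \<sigma> t) * (x t - (1/2 + a * \<sigma> t)))
    \<le> \<bar>\<Sum>t=1..n. x t - (1/2 + a * \<sigma> t)\<bar>
       + a * \<bar>martingale_transform (\<lambda>t. of_bool (\<sigma> t = 1)) x n\<bar>
       + a * \<bar>martingale_transform (\<lambda>t. of_bool (\<sigma> t = -1)) x n\<bar> + a\<^sup>2 * n"
    by (simp add: p_def)
qed

lemma fcS_fun_upd: "k < m \<Longrightarrow> fcS a (x(m := b)) k = fcS a x k"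
  by (induction k) auto

lemma fcS_eq_sum: "fcS a x n = (\<Sum>t=1..n. x t - fcP a x t)"
  by (induction n) (auto simp: fcP_def)

definition fc_regime :: "real \<Rightarrow> real \<Rightarrow> (nat \<Rightarrow> real) \<Rightarrow> nat \<Rightarrow> real" where
  "fc_regime a c x t = of_bool (sgn (fcS a x (t - 1)) = c)"

lemma predictable_fc_regime: "predictable (fc_regime a c)"
proof -
  have "fcS a (x(m := b)) (t - 1) = fcS a x (t - 1)" if "t \<le> m" for x m b and t :: nat
    using that by (cases t) (auto intro: fcS_fun_upd)
  then show ?thesis unfolding predictable_def fc_regime_def by simp
qed

lemma cosh_forecaster_step:
  fixes a s :: real
  assumes "0 \<le> a"
  shows "(cosh (a * (s + (0 - (1/2 + a * sgn s)))) + cosh (a * (s + (1 - (1/2 + a * sgn s))))) / 2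
    \<le> cosh (a / 2) * (exp (- a\<^sup>2) * cosh (a * s) + sinh (a\<^sup>2))"
proof -
  have mean: "(cosh (a * (s + (0 - (1/2 + a * sgn s)))) + cosh (a * (s + (1 - (1/2 + a * sgn s))))) / 2
      = cosh (a / 2) * cosh (a * s - a\<^sup>2 * sgn s)"
    using cosh_add[of "a * s - a\<^sup>2 * sgn s" "a / 2"] cosh_diff[of "a * s - a\<^sup>2 * sgn s" "a / 2"]
    by (simp add: algebra_simps power2_eq_square)
  have "cosh (a * s - a\<^sup>2 * sgn s) \<le> cosh (\<bar>a * s\<bar> - a\<^sup>2)"
  proof -
    consider "s > 0" | "s < 0" | "s = 0" by linarith
    then show ?thesis
    proof cases
      case 2
      then have "a * s - a\<^sup>2 * sgn s = - (\<bar>a * s\<bar> - a\<^sup>2)"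
        using assms by (simp add: abs_mult)
      then show ?thesis by (simp only: cosh_minus)
    qed (use assms cosh_real_ge_1 in \<open>auto simp: abs_mult\<close>)
  qed
  also have "\<dots> \<le> exp (- a\<^sup>2) * cosh (a * s) + sinh (a\<^sup>2)"
    using cosh_diff_le[of "\<bar>a * s\<bar>" "a\<^sup>2"] by simp
  finally show ?thesis unfolding mean by (simp add: mult_left_mono)
qed

lemma cosh_drift_contraction:
  fixes a :: real
  assumes "0 < a" "a \<le> 1"
  shows "cosh (a / 2) * (exp (- a\<^sup>2) * 12 + sinh (a\<^sup>2)) \<le> 12"
proof -
  define u where "u = a\<^sup>2"
  have u: "0 < u" "u \<le> 1" using assms by (auto simp: u_def power_le_one)
  have "cosh (a / 2) \<le> 1 + u / 2"
    using cosh_le_one_plus_two_sq[of "a / 2"] assms by (simp add: u_def power_divide)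
  moreover have "exp (- u) \<le> 1 / (1 + u)"
    using exp_ge_add_one_self[of u] u by (simp add: exp_minus divide_simps)
  moreover have "sinh u \<le> 2 * u" using sinh_le_two_mult u by simp
  ultimately have "cosh (a / 2) * (exp (- u) * 12 + sinh u) \<le> (1 + u / 2) * (12 / (1 + u) + 2 * u)"
    using u by (intro mult_mono add_mono) auto
  also have "\<dots> \<le> 12"
  proof -
    have "u * (u * 6 + u * (u * 2)) \<le> u * 8"
      using u mult_le_one[of u u] by (intro mult_left_mono) auto
    then show ?thesis using u by (simp add: field_simps)
  qed
  finally show ?thesis by (simp add: u_def)
qed

lemma cube_mean_cosh_fcS_le:
  assumes "0 < a" "a \<le> 1"
  shows "cube_mean n (\<lambda>x. cosh (a * fcS a x n)) \<le> 12"
proof (induction n)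
  case 0
  show ?case by (simp add: cube_mean_const)
next
  case (Suc n)
  have "cube_mean (Suc n) (\<lambda>x. cosh (a * fcS a x (Suc n)))
      \<le> cube_mean n (\<lambda>x. cosh (a / 2) * exp (- a\<^sup>2) * cosh (a * fcS a x n) + cosh (a / 2) * sinh (a\<^sup>2))"
    unfolding cube_mean_Suc
  proof (rule cube_mean_mono)
    fix x
    show "(cosh (a * fcS a (x(Suc n := 0)) (Suc n)) + cosh (a * fcS a (x(Suc n := 1)) (Suc n))) / 2
      \<le> cosh (a / 2) * exp (- a\<^sup>2) * cosh (a * fcS a x n) + cosh (a / 2) * sinh (a\<^sup>2)"
      using cosh_forecaster_step[of a "fcS a x n"] assms by (simp add: fcS_fun_upd algebra_simps)
  qed
  also have "\<dots> = cosh (a / 2) * exp (- a\<^sup>2) * cube_mean n (\<lambda>x. cosh (a * fcS a x n)) + cosh (a / 2) * sinh (a\<^sup>2)"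
    by (simp add: cube_mean_add cube_mean_cmult cube_mean_const)
  also have "\<dots> \<le> cosh (a / 2) * (exp (- a\<^sup>2) * 12 + sinh (a\<^sup>2))"
    using Suc by (simp add: algebra_simps)
  also have "\<dots> \<le> 12" by (rule cosh_drift_contraction[OF assms])
  finally show ?case .
qed

lemma smCE_fcP_le:
  assumes "0 < a"
  shows "smCE n x (fcP a x) \<le> 2 / a * cosh (a * fcS a x n)
     + a ^ 3 / 2 * (martingale_transform (fc_regime a 1 x) x n)\<^sup>2
     + a ^ 3 / 2 * (martingale_transform (fc_regime a (-1) x) x n)\<^sup>2 + (1 / a + a\<^sup>2 * n)"
proof -
  have prediction: "fcP a x = (\<lambda>t. 1/2 + a * sgn (fcS a x (t - 1)))"
    by (simp add: fcP_def fun_eq_iff)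
  have regime: "fc_regime a c x = (\<lambda>t. of_bool (sgn (fcS a x (t - 1)) = c))" for c
    by (simp add: fc_regime_def fun_eq_iff)
  have residual: "fcS a x n = (\<Sum>t=1..n. x t - (1/2 + a * sgn (fcS a x (t - 1))))"
    using fcS_eq_sum[of a x n] by (simp add: fcP_def)
  have "smCE n x (fcP a x) \<le> \<bar>fcS a x n\<bar>
      + a * \<bar>martingale_transform (fc_regime a 1 x) x n\<bar>
      + a * \<bar>martingale_transform (fc_regime a (-1) x) x n\<bar> + a\<^sup>2 * n"
    unfolding prediction regime residual
    by (rule smCE_three_level_le) (use assms in \<open>auto simp: sgn_real_def\<close>)
  also have "\<dots> \<le> 2 / a * cosh (a * fcS a x n)
     + (a ^ 3 / 2 * (martingale_transform (fc_regime a 1 x) x n)\<^sup>2 + 1 / (2 * a))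
     + (a ^ 3 / 2 * (martingale_transform (fc_regime a (-1) x) x n)\<^sup>2 + 1 / (2 * a)) + a\<^sup>2 * n"
  proof -
    have "\<bar>fcS a x n\<bar> \<le> 2 / a * cosh (a * fcS a x n)"
      using abs_le_two_cosh[of "a * fcS a x n"] assms by (simp add: abs_mult field_simps)
    then show ?thesis using assms by (intro add_mono mult_abs_le_cube_sq order_refl)
  qed
  finally show ?thesis by (simp add: field_simps)
qed

lemma cube_mean_smCE_fcP_le:
  assumes "0 < a" "a \<le> 1"
  shows "cube_mean n (\<lambda>x. smCE n x (fcP a x)) \<le> 25 / a + a ^ 3 * n / 4 + a\<^sup>2 * n"
proof -
  let ?M = "\<lambda>c x. martingale_transform (fc_regime a c x) x n"
  have "cube_mean n (\<lambda>x. smCE n x (fcP a x)) \<le> cube_mean n (\<lambda>x. 2 / a * cosh (a * fcS a x n)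
      + a ^ 3 / 2 * (?M 1 x)\<^sup>2 + a ^ 3 / 2 * (?M (-1) x)\<^sup>2 + (1 / a + a\<^sup>2 * n))"
    by (rule cube_mean_mono) (rule smCE_fcP_le[OF assms(1)])
  also have "\<dots> = 2 / a * cube_mean n (\<lambda>x. cosh (a * fcS a x n))
      + a ^ 3 / 2 * cube_mean n (\<lambda>x. (?M 1 x)\<^sup>2) + a ^ 3 / 2 * cube_mean n (\<lambda>x. (?M (-1) x)\<^sup>2)
      + (1 / a + a\<^sup>2 * n)"
    by (simp only: cube_mean_add cube_mean_cmult cube_mean_const)
  also have "\<dots> \<le> 2 / a * 12 + a ^ 3 / 2 * (n / 4) + a ^ 3 / 2 * (n / 4) + (1 / a + a\<^sup>2 * n)"
    using cube_mean_cosh_fcS_le[OF assms, of n] assms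
      cube_mean_martingale_transform_sq[OF predictable_fc_regime, of a 1 n]
      cube_mean_martingale_transform_sq[OF predictable_fc_regime, of a "-1" n]
    by (intro add_mono mult_left_mono order_refl) (auto simp: fc_regime_def)
  also have "\<dots> = 25 / a + a ^ 3 * n / 4 + a\<^sup>2 * n" by (simp add: field_simps)
  finally show ?thesis .
qed

theorem lemma8:
  shows "\<exists>C::real. \<forall>T::nat. T \<ge> 1 \<longrightarrow>
    (\<Sum>x\<in>{1..T} \<rightarrow>\<^sub>E {0, 1::real}. smCE T x (fcP (real T powr (-1/3)) x)) / 2 ^ T
      \<le> C * real T powr (1/3)"
proof (intro exI allI impI)
  fix T :: nat assume "T \<ge> 1"
  define a where "a = real T powr (-1/3)"
  have a: "0 < a" "a \<le> 1"
    using \<open>T \<ge> 1\<close> by (simp_all add: a_def powr_le_one_le ge_one_powr_ge_zero powr_minus_divide)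
  have inv_a: "1 / a = real T powr (1/3)"
    using \<open>T \<ge> 1\<close> by (simp add: a_def powr_minus_divide)
  have cube: "a ^ 3 * T = 1"
    using \<open>T \<ge> 1\<close> by (simp add: a_def powr_realpow[symmetric] powr_powr powr_add[symmetric])
  then have square: "a\<^sup>2 * T = 1 / a"
    using a by (simp add: field_simps power2_eq_square power3_eq_cube)
  have "(\<Sum>x\<in>{1..T} \<rightarrow>\<^sub>E {0, 1::real}. smCE T x (fcP a x)) / 2 ^ T
      = cube_mean T (\<lambda>x. smCE T x (fcP a x))"
    by (simp add: cube_mean_def)
  also have "\<dots> \<le> 25 / a + a ^ 3 * T / 4 + a\<^sup>2 * T" by (rule cube_mean_smCE_fcP_le[OF a])
  also have "\<dots> = 26 * (1 / a) + 1/4" by (simp add: cube square)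
  also have "\<dots> \<le> 27 * real T powr (1/3)"
    using \<open>T \<ge> 1\<close> ge_one_powr_ge_zero[of "real T" "1/3"] unfolding inv_a by simp
  finally show "(\<Sum>x\<in>{1..T} \<rightarrow>\<^sub>E {0, 1::real}. smCE T x (fcP (real T powr (-1/3)) x)) / 2 ^ T
      \<le> 27 * real T powr (1/3)"
    unfolding a_def .
qed

end
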